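(* Let $A,B\subset\mathbb F_q^d$ and for $t\in\mathbb F_q$ let $\mu(t)$ be the number of pairs $(a,b)\in A\times B$ with $\|a-b\|=t$. Then \[\sum_{t\in\mathbb F_q}\mu^2(t)\le\frac{|A|^2|B|^2}{q}+\frac{|A|}{q}\sum_{a\in A,\,s\ne0}\Big|\sum_{b\in B}\chi(2sa\cdot b-s\|b\|)\Big|^2.\] Moreover, for any set $\Omega\subset\mathbb F_q^d$ with $\Omega\supset A$, \[\sum_{t\in\mathbb F_q}\mu^2(t)\le\frac{|A|^2|B|^2}{q}+q^{d-1}|A|\sum_{b,b'\in B,\,s\ne0}\widehat{\Omega}(2s(b'-b))\,\chi(s(\|b'\|-\|b\|)).\]
   Context: $\mathbb F_q$ has odd order $q$, $\chi$ is a nontrivial additive character, $\|x\|=x_1^2+\cdots+x_d^2$, sums over $s$ range over $\mathbb F_q^*$. Sets are identified with indicator functions, and $\widehat{\Omega}(m)=q^{-d}\sum_{x\in\mathbb F_q^d}\chi(-x\cdot m)\Omega(x)$. *)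

theory Defs
  imports "HOL-Analysis.Analysis" "HOL-Library.Complex_Order"
begin

text \<open>Vectors in F_q^d are modelled as 'a ^ 'n with 'a a finite field, d = CARD('n).\<close>

definition dotp :: "'a::comm_ring_1 ^ 'n \<Rightarrow> 'a ^ 'n \<Rightarrow> 'a" where
  "dotp x y = (\<Sum>i\<in>UNIV. x $ i * y $ i)"

definition sqnorm :: "'a::comm_ring_1 ^ 'n \<Rightarrow> 'a" where
  "sqnorm x = (\<Sum>i\<in>UNIV. x $ i * x $ i)"

definition additive_char :: "('a::field \<Rightarrow> complex) \<Rightarrow> bool" where
  "additive_char chi \<longleftrightarrow> (\<forall>x. chi x \<noteq> 0) \<and> (\<forall>x y. chi (x + y) = chi x * chi y)"

definition nontrivial_additive_char :: "('a::field \<Rightarrow> complex) \<Rightarrow> bool" where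
  "nontrivial_additive_char chi \<longleftrightarrow> additive_char chi \<and> (\<exists>x. chi x \<noteq> 1)"

definition dist_count :: "('a::{finite,field} ^ 'n) set \<Rightarrow> ('a ^ 'n) set \<Rightarrow> 'a \<Rightarrow> nat" where
  "dist_count A B t = card {(a, b). a \<in> A \<and> b \<in> B \<and> sqnorm (a - b) = t}"

definition fourier_set :: "('a::{finite,field} \<Rightarrow> complex) \<Rightarrow> ('a ^ 'n) set \<Rightarrow> 'a ^ 'n \<Rightarrow> complex" where
  "fourier_set chi \<Omega> m = (1 / of_nat (CARD('a) ^ CARD('n))) * (\<Sum>x\<in>\<Omega>. chi (- dotp x m))"

end

(* For a fixed a, let nu_a(t) count the b in B with ||a - b|| = t.  Since
   ||a - b|| = ||a|| - (2 a.b - ||b||), orthogonality of chi gives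
   q * sum_t nu_a(t)^2 = sum_s |sum_b chi(s (2 a.b - ||b||))|^2, whose s = 0 term is |B|^2.
   Cauchy-Schwarz over a in A, mu(t)^2 <= |A| sum_a nu_a(t)^2, yields the first bound.  The
   summands for s <> 0 are nonnegative, so the sum over a in A may be enlarged to Omega; expanding
   the squares and summing over x in Omega first produces the Fourier coefficients of Omega. *)

theory Submission
  imports Defs
begin

lemma additive_char_add: "additive_char chi \<Longrightarrow> chi (x + y) = chi x * chi y"
  unfolding additive_char_def by blast

lemma additive_char_zero:
  assumes "additive_char chi" shows "chi 0 = 1"
proof -
  have "chi 0 * chi 0 = chi 0 * 1"
    using additive_char_add[OF assms, of 0 0] by simp
  moreover have "chi 0 \<noteq> 0" using assms unfolding additive_char_def by blast
  ultimately show ?thesis by (metis mult_left_cancel)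
qed

lemma additive_char_power:
  assumes "additive_char chi" shows "chi x ^ n = chi (of_nat n * x)"
  by (induction n) (simp_all add: additive_char_zero[OF assms] additive_char_add[OF assms] distrib_right)

text \<open>The powers of \<open>chi x\<close> lie in the finite range of \<open>chi\<close>, so they cannot all be distinct.\<close>
lemma norm_additive_char:
  fixes chi :: "'a::{finite,field} \<Rightarrow> complex"
  assumes "additive_char chi" shows "cmod (chi x) = 1"
proof (rule ccontr)
  assume ne: "cmod (chi x) \<noteq> 1"
  have pos: "cmod (chi x) > 0" using assms unfolding additive_char_def by simp
  have "inj (\<lambda>n::nat. chi x ^ n)"
  proof
    fix m n :: nat assume "chi x ^ m = chi x ^ n"
    then have "cmod (chi x) ^ m = cmod (chi x) ^ n" by (metis norm_power)
    then show "m = n" using ne pos by (metis power_inject_exp')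
  qed
  moreover have "range (\<lambda>n::nat. chi x ^ n) \<subseteq> range chi"
    using additive_char_power[OF assms] by auto
  then have "finite (range (\<lambda>n::nat. chi x ^ n))" by (rule finite_subset) simp
  ultimately show False using finite_imageD by fastforce
qed

lemma additive_char_uminus:
  fixes chi :: "'a::{finite,field} \<Rightarrow> complex"
  assumes "additive_char chi" shows "chi (- x) = cnj (chi x)"
proof -
  have "chi (- x) * chi x = 1"
    using additive_char_add[OF assms, of "- x" x] additive_char_zero[OF assms] by simp
  moreover have "cnj (chi x) * chi x = 1"
    using complex_norm_square[of "chi x"] norm_additive_char[OF assms, of x] by (simp add: mult.commute)
  moreover have "chi x \<noteq> 0" using assms unfolding additive_char_def by blast
  ultimately show ?thesis by (metis mult_cancel_right)
qed

lemma additive_char_diff: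
  fixes chi :: "'a::{finite,field} \<Rightarrow> complex"
  assumes "additive_char chi" shows "chi (x - y) = chi x * cnj (chi y)"
  using additive_char_add[OF assms, of x "- y"] additive_char_uminus[OF assms, of y] by simp

lemma sum_additive_char_mult:
  fixes chi :: "'a::{finite,field} \<Rightarrow> complex"
  assumes "nontrivial_additive_char chi"
  shows "(\<Sum>s\<in>UNIV. chi (s * x)) = (if x = 0 then of_nat CARD('a) else 0)"
proof (cases "x = 0")
  case True
  then show ?thesis
    using assms additive_char_zero unfolding nontrivial_additive_char_def by auto
next
  case False
  have char: "additive_char chi" and "\<exists>c. chi c \<noteq> 1"
    using assms unfolding nontrivial_additive_char_def by blast+
  then obtain c where c: "chi c \<noteq> 1" by blast
  have "(\<Sum>y\<in>UNIV. chi y) = (\<Sum>y\<in>UNIV. chi (y + c))"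
    by (rule sum.reindex_bij_witness[where i="\<lambda>y. y + c" and j="\<lambda>y. y - c"]) auto
  also have "\<dots> = chi c * (\<Sum>y\<in>UNIV. chi y)"
    by (simp add: additive_char_add[OF char] sum_distrib_left mult.commute)
  finally have "(\<Sum>y\<in>UNIV. chi y) = 0" using c by (metis mult_cancel_right1)
  moreover have "(\<Sum>s\<in>UNIV. chi (s * x)) = (\<Sum>y\<in>UNIV. chi y)"
    by (rule sum.reindex_bij_witness[where i="\<lambda>y. y / x" and j="\<lambda>s. s * x"]) (use False in auto)
  ultimately show ?thesis using False by simp
qed

lemma norm_sum_additive_char_squared:
  fixes chi :: "'a::{finite,field} \<Rightarrow> complex"
  assumes "additive_char chi"
  shows "complex_of_real ((cmod (\<Sum>b\<in>B. chi (f b))) ^ 2) = (\<Sum>b\<in>B. \<Sum>b'\<in>B. chi (f b - f b'))"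
  unfolding complex_norm_square by (simp add: sum_product additive_char_diff[OF assms])

lemma sum_card_fibres_squared:
  fixes u :: "'b \<Rightarrow> 'c::finite"
  assumes "finite B"
  shows "(\<Sum>t\<in>UNIV. card {b\<in>B. u b = t} ^ 2) = (\<Sum>b\<in>B. card {b'\<in>B. u b = u b'})"
proof -
  have "(\<Sum>t\<in>UNIV. card {b\<in>B. u b = t} ^ 2) = (\<Sum>t\<in>UNIV. \<Sum>b\<in>{b\<in>B. u b = t}. card {b'\<in>B. u b' = t})"
    by (simp add: power2_eq_square)
  also have "\<dots> = (\<Sum>t\<in>UNIV. \<Sum>b\<in>{b\<in>B. u b = t}. card {b'\<in>B. u b = u b'})"
    by (intro sum.cong refl arg_cong[where f = card]) auto
  also have "\<dots> = (\<Sum>b\<in>B. card {b'\<in>B. u b = u b'})"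
    using assms by (intro sum.group) auto
  finally show ?thesis .
qed

lemma sum_card_fibres_squared_additive_char:
  fixes chi :: "'a::{finite,field} \<Rightarrow> complex" and u :: "'b \<Rightarrow> 'a"
  assumes chi: "nontrivial_additive_char chi" and "finite B"
  shows "real CARD('a) * (\<Sum>t\<in>UNIV. real (card {b\<in>B. u b = t} ^ 2))
    = (\<Sum>s\<in>UNIV. (cmod (\<Sum>b\<in>B. chi (s * u b))) ^ 2)"
proof -
  have char: "additive_char chi" using chi unfolding nontrivial_additive_char_def by blast
  have "complex_of_real (\<Sum>s\<in>UNIV. (cmod (\<Sum>b\<in>B. chi (s * u b))) ^ 2)
      = (\<Sum>s\<in>UNIV. \<Sum>b\<in>B. \<Sum>b'\<in>B. chi (s * u b - s * u b'))"
    unfolding of_real_sum by (simp only: norm_sum_additive_char_squared[OF char])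
  also have "\<dots> = (\<Sum>b\<in>B. \<Sum>b'\<in>B. \<Sum>s\<in>UNIV. chi (s * (u b - u b')))"
    by (subst sum.swap) (simp add: sum.swap[of _ UNIV] right_diff_distrib)
  also have "\<dots> = (\<Sum>b\<in>B. \<Sum>b'\<in>B. if u b = u b' then of_nat CARD('a) else 0)"
    by (simp add: sum_additive_char_mult[OF chi])
  also have "\<dots> = of_nat CARD('a) * (\<Sum>b\<in>B. of_nat (card {b'\<in>B. u b = u b'}))"
    using \<open>finite B\<close> by (simp add: sum.If_cases sum_distrib_left Int_def mult.commute)
  also have "\<dots> = of_nat CARD('a) * of_nat (\<Sum>t\<in>UNIV. card {b\<in>B. u b = t} ^ 2)"
    by (simp only: sum_card_fibres_squared[OF \<open>finite B\<close>] of_nat_sum)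
  also have "\<dots> = complex_of_real (real CARD('a) * (\<Sum>t\<in>UNIV. real (card {b\<in>B. u b = t} ^ 2)))"
    by simp
  finally show ?thesis unfolding of_real_eq_iff by (rule sym)
qed

lemma sqnorm_diff: "sqnorm (a - b) = sqnorm a - 2 * dotp a b + sqnorm (b :: 'a::comm_ring_1 ^ 'n)"
proof -
  have "sqnorm (a - b) = (\<Sum>i\<in>UNIV. a $ i * a $ i - 2 * (a $ i * b $ i) + b $ i * b $ i)"
    unfolding sqnorm_def by (intro sum.cong) (auto simp: algebra_simps mult_2)
  then show ?thesis
    unfolding sqnorm_def dotp_def by (simp add: sum.distrib sum_subtractf sum_distrib_left)
qed

lemma dotp_scaled_diff:
  "dotp x (\<chi> i. c * (b' $ i - b $ i)) = c * (dotp x b' - dotp x (b :: 'a::comm_ring_1 ^ 'n))"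
  unfolding dotp_def by (simp add: sum_distrib_left sum_subtractf[symmetric] algebra_simps)

definition pinned_energy :: "('a::{finite,field} \<Rightarrow> complex) \<Rightarrow> ('a ^ 'n) set \<Rightarrow> 'a ^ 'n \<Rightarrow> real" where
  "pinned_energy chi B x = (\<Sum>s\<in>UNIV - {0}. (cmod (\<Sum>b\<in>B. chi (2 * s * dotp x b - s * sqnorm b))) ^ 2)"

lemma pinned_energy_nonneg: "pinned_energy chi B x \<ge> 0"
  unfolding pinned_energy_def by (intro sum_nonneg) simp

lemma sum_card_pinned_distances_squared:
  fixes chi :: "'a::{finite,field} \<Rightarrow> complex" and a :: "'a ^ 'n"
  assumes chi: "nontrivial_additive_char chi"
  shows "real CARD('a) * (\<Sum>t\<in>UNIV. real (card {b\<in>B. sqnorm (a - b) = t} ^ 2))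
    = real (card B) ^ 2 + pinned_energy chi B a"
proof -
  have char: "additive_char chi" using chi unfolding nontrivial_additive_char_def by blast
  define u where "u b = 2 * dotp a b - sqnorm b" for b
  have dist_eq: "sqnorm (a - b) = sqnorm a - u b" for b
    by (simp add: u_def sqnorm_diff algebra_simps)
  then have fibre: "{b\<in>B. sqnorm (a - b) = t} = {b\<in>B. u b = sqnorm a - t}" for t
    by auto
  have "(\<Sum>t\<in>UNIV. real (card {b\<in>B. sqnorm (a - b) = t} ^ 2))
      = (\<Sum>t\<in>UNIV. real (card {b\<in>B. u b = sqnorm a - t} ^ 2))"
    by (simp only: fibre)
  also have "\<dots> = (\<Sum>t\<in>UNIV. real (card {b\<in>B. u b = t} ^ 2))"
    by (rule sum.reindex_bij_witness[where i="\<lambda>t. sqnorm a - t" and j="\<lambda>t. sqnorm a - t"]) auto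
  finally have "real CARD('a) * (\<Sum>t\<in>UNIV. real (card {b\<in>B. sqnorm (a - b) = t} ^ 2))
      = (\<Sum>s\<in>UNIV. (cmod (\<Sum>b\<in>B. chi (s * u b))) ^ 2)"
    using sum_card_fibres_squared_additive_char[OF chi finite] by simp
  also have "\<dots> = (cmod (\<Sum>b\<in>B. chi (0 * u b))) ^ 2 + (\<Sum>s\<in>UNIV - {0}. (cmod (\<Sum>b\<in>B. chi (s * u b))) ^ 2)"
    by (rule sum.remove) auto
  also have "\<dots> = real (card B) ^ 2 + pinned_energy chi B a"
    unfolding pinned_energy_def u_def by (simp add: additive_char_zero[OF char] algebra_simps)
  finally show ?thesis .
qed

lemma dist_count_eq_sum_pinned:
  "dist_count A B t = (\<Sum>a\<in>A. card {b\<in>B. sqnorm (a - b) = t})"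
proof -
  have "{(a, b). a \<in> A \<and> b \<in> B \<and> sqnorm (a - b) = t} = Sigma A (\<lambda>a. {b\<in>B. sqnorm (a - b) = t})"
    by auto
  then show ?thesis unfolding dist_count_def by (simp add: card_SigmaI)
qed

lemma sum_dist_count_squared_le:
  fixes chi :: "'a::{finite,field} \<Rightarrow> complex" and A B :: "('a ^ 'n) set"
  assumes chi: "nontrivial_additive_char chi"
  shows "(\<Sum>t\<in>UNIV. real (dist_count A B t ^ 2))
    \<le> real (card A) ^ 2 * real (card B) ^ 2 / real CARD('a)
      + real (card A) / real CARD('a) * (\<Sum>a\<in>A. pinned_energy chi B a)"
proof -
  define q where "q = real CARD('a)"
  define \<nu> where "\<nu> a t = real (card {b\<in>B. sqnorm (a - b) = t})" for a t
  have "(\<Sum>t\<in>UNIV. real (dist_count A B t ^ 2)) = (\<Sum>t\<in>UNIV. (\<Sum>a\<in>A. \<nu> a t) ^ 2)"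
    unfolding dist_count_eq_sum_pinned \<nu>_def by simp
  also have "\<dots> \<le> (\<Sum>t\<in>UNIV. (\<Sum>a\<in>A. (\<nu> a t) ^ 2) * card A)"
    by (intro sum_mono sum_squared_le_sum_of_squares)
  also have "\<dots> = real (card A) * (\<Sum>a\<in>A. \<Sum>t\<in>UNIV. (\<nu> a t) ^ 2)"
    by (subst sum.swap) (simp add: sum_distrib_left sum_distrib_right mult.commute)
  also have "\<dots> = real (card A) * (\<Sum>a\<in>A. (real (card B) ^ 2 + pinned_energy chi B a) / q)"
    using sum_card_pinned_distances_squared[OF chi] unfolding \<nu>_def q_def
    by (intro arg_cong2[where f = "(*)"] sum.cong refl) (simp add: field_simps)
  also have "\<dots> = real (card A) ^ 2 * real (card B) ^ 2 / q + real (card A) / q * (\<Sum>a\<in>A. pinned_energy chi B a)"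
    by (simp add: sum_divide_distrib[symmetric] sum.distrib add_divide_distrib distrib_left power2_eq_square)
  finally show ?thesis unfolding q_def .
qed

lemma sum_pinned_energy_eq_fourier:
  fixes chi :: "'a::{finite,field} \<Rightarrow> complex" and B \<Omega> :: "('a ^ 'n) set"
  assumes char: "additive_char chi"
  shows "complex_of_real (\<Sum>x\<in>\<Omega>. pinned_energy chi B x)
    = of_nat (CARD('a) ^ CARD('n)) * (\<Sum>b\<in>B. \<Sum>b'\<in>B. \<Sum>s\<in>UNIV - {0}.
        fourier_set chi \<Omega> (\<chi> i. 2 * s * (b' $ i - b $ i)) * chi (s * (sqnorm b' - sqnorm b)))"
proof -
  define S :: "'a set" where "S = UNIV - {0}"
  have phase: "2 * s * dotp x b - s * sqnorm b - (2 * s * dotp x b' - s * sqnorm b')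
      = - dotp x (\<chi> i. 2 * s * (b' $ i - b $ i)) + s * (sqnorm b' - sqnorm b)" for x s b b'
    unfolding dotp_scaled_diff by (simp add: algebra_simps)
  have "complex_of_real (\<Sum>x\<in>\<Omega>. pinned_energy chi B x)
      = (\<Sum>x\<in>\<Omega>. \<Sum>s\<in>S. \<Sum>b\<in>B. \<Sum>b'\<in>B.
          chi (- dotp x (\<chi> i. 2 * s * (b' $ i - b $ i))) * chi (s * (sqnorm b' - sqnorm b)))"
    unfolding pinned_energy_def of_real_sum S_def
    by (simp only: norm_sum_additive_char_squared[OF char] phase additive_char_add[OF char])
  also have "\<dots> = (\<Sum>b\<in>B. \<Sum>b'\<in>B. \<Sum>s\<in>S. \<Sum>x\<in>\<Omega>.
          chi (- dotp x (\<chi> i. 2 * s * (b' $ i - b $ i))) * chi (s * (sqnorm b' - sqnorm b)))"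
    by (simp only: sum.swap[of _ \<Omega> S] sum.swap[of _ \<Omega> B] sum.swap[of _ S B])
  also have "\<dots> = (\<Sum>b\<in>B. \<Sum>b'\<in>B. \<Sum>s\<in>S. of_nat (CARD('a) ^ CARD('n)) *
          (fourier_set chi \<Omega> (\<chi> i. 2 * s * (b' $ i - b $ i)) * chi (s * (sqnorm b' - sqnorm b))))"
    unfolding fourier_set_def by (simp add: sum_distrib_right)
  finally show ?thesis unfolding S_def by (simp add: sum_distrib_left)
qed

lemma sum_dist_count_squared_le_fourier:
  fixes chi :: "'a::{finite,field} \<Rightarrow> complex" and A B \<Omega> :: "('a ^ 'n) set"
  assumes chi: "nontrivial_additive_char chi" and "A \<subseteq> \<Omega>"
  shows "complex_of_real (\<Sum>t\<in>UNIV. real (dist_count A B t ^ 2))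
    \<le> complex_of_real (real (card A) ^ 2 * real (card B) ^ 2 / real CARD('a))
      + of_nat (CARD('a) ^ (CARD('n) - 1)) * of_nat (card A) *
        (\<Sum>b\<in>B. \<Sum>b'\<in>B. \<Sum>s\<in>UNIV - {0}.
          fourier_set chi \<Omega> (\<chi> i. 2 * s * (b' $ i - b $ i)) * chi (s * (sqnorm b' - sqnorm b)))"
proof -
  define q where "q = real CARD('a)"
  define E where "E X = (\<Sum>x\<in>X. pinned_energy chi B x)" for X
  have char: "additive_char chi" using chi unfolding nontrivial_additive_char_def by blast
  have "E A \<le> E \<Omega>"
    unfolding E_def using \<open>A \<subseteq> \<Omega>\<close> by (intro sum_mono2) (auto simp: pinned_energy_nonneg)
  then have "real (card A) / q * E A \<le> real (card A) / q * E \<Omega>"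
    by (intro mult_left_mono) (simp_all add: q_def)
  with sum_dist_count_squared_le[OF chi, of A B]
  have bound: "(\<Sum>t\<in>UNIV. real (dist_count A B t ^ 2))
      \<le> real (card A) ^ 2 * real (card B) ^ 2 / q + real (card A) / q * E \<Omega>"
    unfolding E_def q_def by linarith
  have "CARD('a) ^ CARD('n) = CARD('a) * CARD('a) ^ (CARD('n) - 1)"
    by (simp flip: power_Suc)
  with sum_pinned_energy_eq_fourier[OF char, of B \<Omega>]
  have "of_nat (CARD('a) ^ (CARD('n) - 1)) * of_nat (card A) *
      (\<Sum>b\<in>B. \<Sum>b'\<in>B. \<Sum>s\<in>UNIV - {0}.
        fourier_set chi \<Omega> (\<chi> i. 2 * s * (b' $ i - b $ i)) * chi (s * (sqnorm b' - sqnorm b)))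
    = complex_of_real (real (card A) / q * E \<Omega>)"
    unfolding E_def q_def by (simp add: field_simps)
  with bound show ?thesis
    unfolding q_def by (simp add: less_eq_complex_def)
qed

theorem lemma6p1:
  fixes chi :: "'a::{finite,field} \<Rightarrow> complex"
    and A B :: "('a ^ 'n) set"
  assumes "odd (CARD('a))"
    and "nontrivial_additive_char chi"
  shows "((\<Sum>t\<in>UNIV. real (dist_count A B t ^ 2))
           \<le> real (card A) ^ 2 * real (card B) ^ 2 / real CARD('a)
             + real (card A) / real CARD('a) *
               (\<Sum>a\<in>A. \<Sum>s\<in>UNIV - {0}.
                  (cmod (\<Sum>b\<in>B. chi (2 * s * dotp a b - s * sqnorm b))) ^ 2))
       \<and> (\<forall>\<Omega>. A \<subseteq> \<Omega> \<longrightarrow>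
           complex_of_real (\<Sum>t\<in>UNIV. real (dist_count A B t ^ 2))
           \<le> complex_of_real (real (card A) ^ 2 * real (card B) ^ 2 / real CARD('a))
             + of_nat (CARD('a) ^ (CARD('n) - 1)) * of_nat (card A) *
               (\<Sum>b\<in>B. \<Sum>b'\<in>B. \<Sum>s\<in>UNIV - {0}.
                  fourier_set chi \<Omega> (\<chi> i. 2 * s * (b' $ i - b $ i))
                  * chi (s * (sqnorm b' - sqnorm b))))"
  using sum_dist_count_squared_le[OF assms(2), of A B]
    sum_dist_count_squared_le_fourier[OF assms(2)]
  unfolding pinned_energy_def by blast

end
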